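(* Let $n$ be an odd integer. If the cycle $C_n$ admits an optimal extended irregular dominating set, then the cycle $C_{2n}$ also admits an optimal extended irregular dominating set.
   Context: $C_m$ is the cycle on $m$ vertices. In a finite simple graph $\Gamma=(V,E)$ with distance $d$, a vertex $v$ carrying a non-negative integer label $\ell$ dominates (covers) exactly the vertices $u$ with $d(u,v)=\ell$; a vertex labeled $0$ dominates only itself. For $k\ge0$, a $k$-extended irregular dominating set is a set $S\subseteq V$ of $k$ vertices with a labeling $\lambda:S\to\mathbb{Z}_{\ge0}$ with distinct labels, such that every vertex of $V$ is dominated by some vertex of $S$; it is assumed that some vertex of $S$ has label $0$. $\gamma_e(\Gamma)$ is the minimum cardinality of such a set; a $k$-extended irregular dominating set is optimal if $k=\gamma_e(\Gamma)$. *)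

theory Defs
  imports Main
begin

definition cycle_verts :: "nat \<Rightarrow> nat set" where
  "cycle_verts m = {..<m}"

definition cycle_adj :: "nat \<Rightarrow> nat \<Rightarrow> nat \<Rightarrow> bool" where
  "cycle_adj m u v \<longleftrightarrow> u < m \<and> v < m \<and> u \<noteq> v \<and> (v = (u + 1) mod m \<or> u = (v + 1) mod m)"

definition gdist :: "('a \<Rightarrow> 'a \<Rightarrow> bool) \<Rightarrow> 'a \<Rightarrow> 'a \<Rightarrow> nat" where
  "gdist E u v = (LEAST k. (E ^^ k) u v)"

definition ext_irr_dom_set ::
  "'a set \<Rightarrow> ('a \<Rightarrow> 'a \<Rightarrow> bool) \<Rightarrow> 'a set \<Rightarrow> ('a \<Rightarrow> nat) \<Rightarrow> bool" where
  "ext_irr_dom_set V E S lab \<longleftrightarrow>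
     S \<subseteq> V \<and> inj_on lab S \<and> (\<exists>s\<in>S. lab s = 0) \<and>
     (\<forall>u\<in>V. \<exists>v\<in>S. gdist E u v = lab v)"

definition gamma_e :: "'a set \<Rightarrow> ('a \<Rightarrow> 'a \<Rightarrow> bool) \<Rightarrow> nat" where
  "gamma_e V E = (LEAST k. \<exists>S lab. ext_irr_dom_set V E S lab \<and> card S = k)"

definition optimal_ext_irr_dom_set ::
  "'a set \<Rightarrow> ('a \<Rightarrow> 'a \<Rightarrow> bool) \<Rightarrow> 'a set \<Rightarrow> ('a \<Rightarrow> nat) \<Rightarrow> bool" where
  "optimal_ext_irr_dom_set V E S lab \<longleftrightarrow>
     ext_irr_dom_set V E S lab \<and> card S = gamma_e V E"

definition admits_optimal_eids :: "nat \<Rightarrow> bool" where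
  "admits_optimal_eids m \<longleftrightarrow>
     (\<exists>S lab. optimal_ext_irr_dom_set (cycle_verts m) (cycle_adj m) S lab)"

end

theory Submission
  imports Defs
begin

(* An optimal set exists as soon as any extended irregular dominating set does, so it
   suffices to build one on C_2n from one on C_n.  For odd n the Chinese remainder theorem
   identifies C_2n with C_n x Z_2, and the distance in C_2n between vertices lying over
   residues at distance d in C_n is whichever of d and n - d has the parity of their
   difference.  Hence a dominating vertex of C_n with label l, lifted to parity alpha and
   relabelled by the one of l, n - l of parity alpha + gamma, dominates exactly the
   parity-gamma lifts of the vertices it dominated in C_n.  All useful labels are at most n/2,
   so some vertex c of C_n is not in the set.  Each dominating vertex v is used twice: its own
   lift serves the even class, and the lift of its mirror image under the reflection about c
   serves the odd class with the other label.  Giving both copies the parity that records on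
   which side of c the vertex v lies keeps the new vertices distinct, and since l is at most
   n/2 it is recovered from either new label, which keeps the new labels distinct. *)

definition cdist :: "nat \<Rightarrow> int \<Rightarrow> nat" where
  "cdist m z = nat (min (z mod int m) ((- z) mod int m))"

lemma cdist_cong: "z mod int m = z' mod int m \<Longrightarrow> cdist m z = cdist m z'"
  unfolding cdist_def by (metis mod_minus_cong)

lemma cdist_uminus [simp]: "cdist m (- z) = cdist m z"
  unfolding cdist_def by (simp add: min.commute)

lemma cdist_le_abs: "0 < m \<Longrightarrow> int (cdist m z) \<le> \<bar>z\<bar>"
  unfolding cdist_def by (cases "0 \<le> z") (auto simp: min_le_iff_disj zmod_le_nonneg_dividend)

lemma cdist_cases:
  assumes "0 < m"
  shows "z mod int m = int (cdist m z) mod int m \<or> z mod int m = - int (cdist m z) mod int m"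
  unfolding cdist_def using assms
  by (cases "z mod int m \<le> (- z) mod int m") (auto simp: min_def mod_minus_eq)

lemma cdist_le_half: "0 < m \<Longrightarrow> 2 * cdist m z \<le> m"
proof -
  assume "0 < m"
  then have "z mod int m + (- z) mod int m \<le> int m" "0 \<le> z mod int m" "0 \<le> (- z) mod int m"
    using pos_mod_bound[of "int m" z] by (auto simp: zmod_zminus1_eq_if less_imp_le)
  then have "2 * int (cdist m z) \<le> int m"
    unfolding cdist_def by (simp add: min_def)
  then show ?thesis by linarith
qed

lemma cdist_of_nat: "2 * d \<le> m \<Longrightarrow> cdist m (int d) = d"
proof (cases "d = 0")
  case False
  assume "2 * d \<le> m"
  then have "int d mod int m = int d" "(- int d) mod int m = int m - int d"
    using False by (simp_all add: zmod_zminus1_eq_if)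
  then show ?thesis
    unfolding cdist_def using \<open>2 * d \<le> m\<close> by simp
qed (simp add: cdist_def)

lemma cdist_eqI:
  assumes "2 * d \<le> m" and "z mod int m = int d mod int m \<or> z mod int m = - int d mod int m"
  shows "cdist m z = d"
  using assms(2) cdist_cong[of z m "int d"] cdist_cong[of z m "- int d"]
    cdist_of_nat[OF assms(1)] by auto

lemma cycle_adj_sym: "cycle_adj m u v \<Longrightarrow> cycle_adj m v u"
  unfolding cycle_adj_def by auto

lemma relpowp_cycle_adj_sym: "(cycle_adj m ^^ k) u v \<Longrightarrow> (cycle_adj m ^^ k) v u"
proof (induction k arbitrary: v)
  case (Suc k)
  then obtain y where "(cycle_adj m ^^ k) u y" "cycle_adj m y v"
    by (blast elim: relpowp_Suc_E)
  with Suc.IH show ?case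
    by (blast intro: relpowp_Suc_I2 cycle_adj_sym)
qed simp

lemma cycle_adj_Suc_mod: "2 \<le> m \<Longrightarrow> a < m \<Longrightarrow> cycle_adj m a (Suc a mod m)"
  unfolding cycle_adj_def by (cases "Suc a = m") simp_all

lemma relpowp_cycle_adj_add_mod:
  assumes "2 \<le> m" and "u < m"
  shows "(cycle_adj m ^^ k) u ((u + k) mod m)"
proof (induction k)
  case (Suc k)
  have "cycle_adj m ((u + k) mod m) ((u + Suc k) mod m)"
    using cycle_adj_Suc_mod[OF assms(1), of "(u + k) mod m"] assms by (simp add: mod_Suc_eq)
  with Suc.IH show ?case by (rule relpowp_Suc_I)
qed (use assms in simp)

lemma cycle_adj_int_mod:
  assumes "cycle_adj m a b"
  shows "\<exists>e. \<bar>e\<bar> = 1 \<and> int b mod int m = (int a + e) mod int m"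
proof -
  have "b = (a + 1) mod m \<or> a = (b + 1) mod m"
    using assms unfolding cycle_adj_def by auto
  then show ?thesis
  proof
    assume "b = (a + 1) mod m"
    then have "int b mod int m = (int a + 1) mod int m"
      by (simp add: of_nat_mod add.commute)
    then show ?thesis by (intro exI[of _ 1]) simp
  next
    assume "a = (b + 1) mod m"
    then have "int a mod int m = (int b + 1) mod int m"
      by (simp add: of_nat_mod add.commute)
    then have "(int a + - 1) mod int m = int b mod int m"
      by (metis mod_add_left_eq add.assoc add.right_neutral add.right_inverse)
    then show ?thesis by (intro exI[of _ "- 1"]) simp
  qed
qed

lemma relpowp_cycle_adj_displacement:
  "(cycle_adj m ^^ k) u v \<Longrightarrow> \<exists>j. \<bar>j\<bar> \<le> int k \<and> int v mod int m = (int u + j) mod int m"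
proof (induction k arbitrary: v)
  case (Suc k)
  then obtain y where "(cycle_adj m ^^ k) u y" "cycle_adj m y v"
    by (blast elim: relpowp_Suc_E)
  then obtain j e where j: "\<bar>j\<bar> \<le> int k" "int y mod int m = (int u + j) mod int m"
    and e: "\<bar>e\<bar> = 1" "int v mod int m = (int y + e) mod int m"
    using Suc.IH cycle_adj_int_mod by blast
  have "int v mod int m = (int y mod int m + e) mod int m"
    using e(2) by (simp add: mod_add_left_eq)
  also have "\<dots> = (int u + (j + e)) mod int m"
    using j(2) by (simp add: mod_add_left_eq add.assoc)
  finally show ?case
    using j(1) e(1) by (intro exI[of _ "j + e"]) simp
qed simp

lemma relpowp_cycle_adj_of_cong:
  assumes "2 \<le> m" and "u < m" and "v < m" and "(int v - int u) mod int m = int d mod int m"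
  shows "(cycle_adj m ^^ d) u v"
proof -
  have "int m dvd (int v - int u) - int d"
    using assms(4) by (simp only: mod_eq_dvd_iff)
  then have "int m dvd int v - int (u + d)"
    by (simp add: diff_diff_eq)
  then have "int v mod int m = int (u + d) mod int m"
    by (simp only: mod_eq_dvd_iff)
  then have "int v = int ((u + d) mod m)"
    using assms(3) by (simp add: of_nat_mod)
  then have "v = (u + d) mod m"
    by simp
  then show ?thesis
    using relpowp_cycle_adj_add_mod[OF assms(1,2)] by simp
qed

lemma gdist_cycle:
  assumes "2 \<le> m" and "u < m" and "v < m"
  shows "gdist (cycle_adj m) u v = cdist m (int v - int u)"
  unfolding gdist_def
proof (rule Least_equality)
  let ?d = "cdist m (int v - int u)"
  consider "(int v - int u) mod int m = int ?d mod int m"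
    | "(int v - int u) mod int m = - int ?d mod int m"
    using cdist_cases[of m "int v - int u"] assms(1) by fastforce
  then show "(cycle_adj m ^^ ?d) u v"
  proof cases
    case 1
    then show ?thesis
      using relpowp_cycle_adj_of_cong[OF assms] by blast
  next
    case 2
    then have "(- (int v - int u)) mod int m = (- (- int ?d)) mod int m"
      by (rule mod_minus_cong)
    then have "(int u - int v) mod int m = int ?d mod int m"
      by simp
    then show ?thesis
      using relpowp_cycle_adj_of_cong[OF assms(1,3,2)] relpowp_cycle_adj_sym by blast
  qed
next
  fix k assume "(cycle_adj m ^^ k) u v"
  then obtain j where j: "\<bar>j\<bar> \<le> int k" "int v mod int m = (int u + j) mod int m"
    using relpowp_cycle_adj_displacement by blast
  have "(int v - int u) mod int m = (int v mod int m - int u) mod int m"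
    by (simp add: mod_diff_left_eq)
  also have "\<dots> = j mod int m"
    using j(2) by (simp add: mod_diff_left_eq)
  finally have "cdist m (int v - int u) = cdist m j"
    by (rule cdist_cong)
  then show "cdist m (int v - int u) \<le> k"
    using cdist_le_abs[of m j] assms(1) j(1) by simp
qed

lemma ext_irr_dom_set_cycle_iff:
  assumes "2 \<le> m"
  shows "ext_irr_dom_set (cycle_verts m) (cycle_adj m) S lab \<longleftrightarrow>
    S \<subseteq> {..<m} \<and> inj_on lab S \<and> (\<exists>s\<in>S. lab s = 0) \<and>
    (\<forall>u<m. \<exists>v\<in>S. cdist m (int v - int u) = lab v)"
proof -
  have "(\<forall>u\<in>{..<m}. \<exists>v\<in>S. gdist (cycle_adj m) u v = lab v) \<longleftrightarrow>
      (\<forall>u<m. \<exists>v\<in>S. cdist m (int v - int u) = lab v)" if "S \<subseteq> {..<m}"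
  proof -
    have "gdist (cycle_adj m) u v = cdist m (int v - int u)" if "u < m" "v \<in> S" for u v
      using gdist_cycle[OF assms] that \<open>S \<subseteq> {..<m}\<close> by auto
    then show ?thesis by auto
  qed
  then show ?thesis
    unfolding ext_irr_dom_set_def cycle_verts_def by blast
qed

lemma ext_irr_dom_set_imageI:
  assumes inj_f: "inj_on f I" and inj_g: "inj_on g I" and "f ` I \<subseteq> V" and "\<exists>i\<in>I. g i = 0"
    and "\<forall>u\<in>V. \<exists>i\<in>I. gdist E u (f i) = g i"
  shows "ext_irr_dom_set V E (f ` I) (g \<circ> the_inv_into I f)"
proof -
  have label: "(g \<circ> the_inv_into I f) (f i) = g i" if "i \<in> I" for i
    using the_inv_into_f_f[OF inj_f that] by simp
  have "inj_on (g \<circ> the_inv_into I f) (f ` I)"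
  proof (rule inj_onI)
    fix x y assume "x \<in> f ` I" "y \<in> f ` I" "(g \<circ> the_inv_into I f) x = (g \<circ> the_inv_into I f) y"
    then show "x = y"
      using inj_g label by (auto dest: inj_onD)
  qed
  moreover have "\<exists>s\<in>f ` I. (g \<circ> the_inv_into I f) s = 0"
    using assms(4) label by auto
  moreover have "\<forall>u\<in>V. \<exists>v\<in>f ` I. gdist E u v = (g \<circ> the_inv_into I f) v"
    using assms(5) label by auto
  ultimately show ?thesis
    using assms(3) unfolding ext_irr_dom_set_def by blast
qed

lemma admits_optimal_eidsI:
  assumes "ext_irr_dom_set (cycle_verts m) (cycle_adj m) S lab"
  shows "admits_optimal_eids m"
proof -
  let ?P = "\<lambda>k. \<exists>S lab. ext_irr_dom_set (cycle_verts m) (cycle_adj m) S lab \<and> card S = k"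
  have "?P (card S)"
    using assms by blast
  then have "?P (Least ?P)"
    by (rule LeastI)
  then show ?thesis
    unfolding admits_optimal_eids_def optimal_ext_irr_dom_set_def gamma_e_def by blast
qed

lemma ext_irr_dom_set_cycle_small_labels:
  assumes "2 \<le> m" and "ext_irr_dom_set (cycle_verts m) (cycle_adj m) S lab"
  shows "ext_irr_dom_set (cycle_verts m) (cycle_adj m) {v\<in>S. 2 * lab v \<le> m} lab"
proof -
  let ?T = "{v\<in>S. 2 * lab v \<le> m}"
  have S: "S \<subseteq> {..<m}" "inj_on lab S" "\<exists>s\<in>S. lab s = 0"
    and cover: "\<forall>u<m. \<exists>v\<in>S. cdist m (int v - int u) = lab v"
    using assms unfolding ext_irr_dom_set_cycle_iff[OF assms(1)] by auto
  have "\<exists>v\<in>?T. cdist m (int v - int u) = lab v" if "u < m" for u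
  proof -
    obtain v where "v \<in> S" "cdist m (int v - int u) = lab v"
      using cover \<open>u < m\<close> by blast
    moreover have "2 * cdist m (int v - int u) \<le> m"
      using assms(1) by (intro cdist_le_half) simp
    ultimately show ?thesis
      by auto
  qed
  moreover have "?T \<subseteq> {..<m}" "inj_on lab ?T" "\<exists>s\<in>?T. lab s = 0"
    using S by (auto intro: inj_on_subset)
  ultimately show ?thesis
    unfolding ext_irr_dom_set_cycle_iff[OF assms(1)] by blast
qed

lemma ex_vertex_notin_small_label_set:
  fixes m :: nat
  assumes "3 \<le> m" and "S \<subseteq> {..<m}" and "inj_on lab S" and "\<forall>v\<in>S. 2 * lab v \<le> m"
  obtains c where "c < m" and "c \<notin> S"
proof -
  have "lab ` S \<subseteq> {..m div 2}"
    using assms(4) by auto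
  then have "card S \<le> card {..m div 2}"
    using assms(3) by (intro card_inj_on_le) auto
  also have "\<dots> < card {..<m}"
    using assms(1) by simp
  finally have "\<not> {..<m} \<subseteq> S"
    using assms(2) card_mono[of S "{..<m}"] by auto
  then show ?thesis
    using that by blast
qed

definition match_parity :: "nat \<Rightarrow> bool \<Rightarrow> nat \<Rightarrow> nat" where
  "match_parity n b d = (if odd d = b then d else n - d)"

lemma odd_match_parity: "odd n \<Longrightarrow> d \<le> n \<Longrightarrow> odd (match_parity n b d) = b"
  unfolding match_parity_def by auto

lemma match_parity_eq_iff:
  assumes "odd n" and "2 * d \<le> n" and "2 * d' \<le> n"
  shows "match_parity n b d = match_parity n b' d' \<longleftrightarrow> d = d' \<and> b = b'"
proof
  assume eq: "match_parity n b d = match_parity n b' d'"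
  then have "b = b'"
    using odd_match_parity[OF assms(1)] assms(2,3) by (metis le_add2 mult_2 order_trans)
  moreover have "d = d'"
    using eq assms unfolding match_parity_def by (auto split: if_splits)
  ultimately show "d = d' \<and> b = b'" by simp
qed simp

lemma double_dvd_if_odd_dvd_even:
  fixes n x :: int
  assumes "odd n" and "n dvd x" and "even x"
  shows "2 * n dvd x"
proof -
  obtain k where x: "x = n * k" using assms(2) ..
  with assms(1,3) have "even k" by simp
  with x show ?thesis by (auto elim: evenE)
qed

lemma cdist_double:
  assumes "odd n"
  shows "cdist (2 * n) z = match_parity n (odd z) (cdist n z)"
proof -
  define d where "d = cdist n z"
  have "0 < n" using assms by (rule odd_pos)
  then have "2 * d \<le> n" unfolding d_def by (rule cdist_le_half)
  obtain s where s: "s = int d \<or> s = - int d" and "z mod int n = s mod int n"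
    using cdist_cases[OF \<open>0 < n\<close>, of z] unfolding d_def by blast
  then have "int n dvd z - s"
    by (simp only: mod_eq_dvd_iff)
  have odd_n: "odd (int n)" using assms by simp
  show ?thesis
  proof (cases "odd z = odd d")
    case True
    with s have "even (z - s)" by auto
    then have "int (2 * n) dvd z - s"
      using double_dvd_if_odd_dvd_even[OF odd_n \<open>int n dvd z - s\<close>] by simp
    then have "z mod int (2 * n) = s mod int (2 * n)"
      by (simp only: mod_eq_dvd_iff)
    then have "cdist (2 * n) z = d"
      using s \<open>2 * d \<le> n\<close> by (intro cdist_eqI) auto
    with True show ?thesis by (simp add: match_parity_def d_def)
  next
    case False
    have "int n dvd (z - s) - int n"
      using \<open>int n dvd z - s\<close> by (rule dvd_diff) simp
    moreover have "even ((z - s) - int n)"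
      using False s assms by auto
    ultimately have "int (2 * n) dvd (z - s) - int n"
      using double_dvd_if_odd_dvd_even[OF odd_n] by simp
    then have "z mod int (2 * n) = (s + int n) mod int (2 * n)"
      by (simp only: mod_eq_dvd_iff diff_diff_eq)
    moreover have "(s + int n) mod int (2 * n) = int (n - d) mod int (2 * n) \<or>
        (s + int n) mod int (2 * n) = - int (n - d) mod int (2 * n)"
    proof (cases "s = int d")
      case True
      have "int (2 * n) dvd (s + int n) - (- int (n - d))"
        using True \<open>2 * d \<le> n\<close> by (simp add: of_nat_diff)
      then show ?thesis
        by (simp only: mod_eq_dvd_iff) simp
    next
      case False
      with s \<open>2 * d \<le> n\<close> show ?thesis
        by (simp add: of_nat_diff)
    qed
    ultimately have "cdist (2 * n) z = n - d"
      using \<open>2 * d \<le> n\<close> by (intro cdist_eqI) auto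
    with False show ?thesis by (simp add: match_parity_def d_def)
  qed
qed

definition cycle_lift :: "nat \<Rightarrow> nat \<Rightarrow> bool \<Rightarrow> nat" where
  "cycle_lift n a b = (if odd a = b then a else a + n)"

lemma cycle_lift_less: "a < n \<Longrightarrow> cycle_lift n a b < 2 * n"
  unfolding cycle_lift_def by auto

lemma cycle_lift_mod: "a < n \<Longrightarrow> cycle_lift n a b mod n = a"
  unfolding cycle_lift_def by auto

lemma odd_cycle_lift: "odd n \<Longrightarrow> odd (cycle_lift n a b) = b"
  unfolding cycle_lift_def by auto

lemma cycle_lift_eq_iff:
  assumes "odd n" and "a < n" and "a' < n"
  shows "cycle_lift n a b = cycle_lift n a' b' \<longleftrightarrow> a = a' \<and> b = b'"
proof
  assume eq: "cycle_lift n a b = cycle_lift n a' b'"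
  then have "a = a'"
    using cycle_lift_mod[OF assms(2), of b] cycle_lift_mod[OF assms(3), of b'] by simp
  moreover have "b = b'"
    using eq odd_cycle_lift[OF assms(1), of a b] odd_cycle_lift[OF assms(1), of a' b'] by simp
  ultimately show "a = a' \<and> b = b'" by simp
qed simp

lemma cdist_double_cycle_lift:
  assumes "odd n" and "a < n"
  shows "cdist (2 * n) (int (cycle_lift n a b) - int x) = match_parity n (b \<noteq> odd x) (cdist n (int a - int x))"
proof -
  have "int a = int (cycle_lift n a b mod n)"
    using cycle_lift_mod[OF assms(2)] by simp
  also have "\<dots> = int (cycle_lift n a b) mod int n"
    by (rule of_nat_mod)
  finally have "(int (cycle_lift n a b) - int x) mod int n = (int a - int x) mod int n"
    by (simp add: mod_diff_left_eq)
  then have "cdist n (int (cycle_lift n a b) - int x) = cdist n (int a - int x)"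
    by (rule cdist_cong)
  moreover have "odd (int (cycle_lift n a b) - int x) \<longleftrightarrow> b \<noteq> odd x"
    using odd_cycle_lift[OF assms(1), of a b] by auto
  ultimately show ?thesis
    by (simp only: cdist_double[OF assms(1)])
qed

definition cycle_reflect :: "nat \<Rightarrow> nat \<Rightarrow> nat \<Rightarrow> nat" where
  "cycle_reflect n c v = nat ((2 * int c - int v) mod int n)"

lemma int_cycle_reflect: "0 < n \<Longrightarrow> int (cycle_reflect n c v) = (2 * int c - int v) mod int n"
  unfolding cycle_reflect_def by simp

lemma cycle_reflect_less:
  assumes "0 < n"
  shows "cycle_reflect n c v < n"
proof -
  have "int (cycle_reflect n c v) < int n"
    unfolding int_cycle_reflect[OF assms] using assms by simp
  then show ?thesis by simp
qed

lemma cycle_reflect_reflect: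
  assumes "v < n"
  shows "cycle_reflect n c (cycle_reflect n c v) = v"
proof -
  have "0 < n" using assms by simp
  have "int (cycle_reflect n c (cycle_reflect n c v)) = (2 * int c - (2 * int c - int v) mod int n) mod int n"
    unfolding int_cycle_reflect[OF \<open>0 < n\<close>] ..
  also have "\<dots> = int v mod int n"
    by (simp add: mod_diff_right_eq)
  also have "\<dots> = int v"
    using assms by simp
  finally show ?thesis by simp
qed

lemma cycle_reflect_eq_iff:
  "v < n \<Longrightarrow> v' < n \<Longrightarrow> cycle_reflect n c v = cycle_reflect n c v' \<longleftrightarrow> v = v'"
  by (metis cycle_reflect_reflect)

lemma cdist_cycle_reflect:
  assumes "0 < n"
  shows "cdist n (int (cycle_reflect n c v) - int y) = cdist n (int v - int (cycle_reflect n c y))"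
proof -
  have "(int (cycle_reflect n c v) - int y) mod int n = (2 * int c - int v - int y) mod int n"
    unfolding int_cycle_reflect[OF assms] by (simp add: mod_diff_left_eq)
  then have "cdist n (int (cycle_reflect n c v) - int y) = cdist n (2 * int c - int v - int y)"
    by (rule cdist_cong)
  also have "\<dots> = cdist n (- (int v - (2 * int c - int y)))"
    by (rule arg_cong[where f = "cdist n"]) simp
  also have "\<dots> = cdist n (int v - (2 * int c - int y))"
    by (rule cdist_uminus)
  also have "(int v - (2 * int c - int y)) mod int n = (int v - int (cycle_reflect n c y)) mod int n"
    unfolding int_cycle_reflect[OF assms] by (simp add: mod_diff_right_eq)
  then have "cdist n (int v - (2 * int c - int y)) = cdist n (int v - int (cycle_reflect n c y))"
    by (rule cdist_cong)
  finally show ?thesis .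
qed

definition cycle_side :: "nat \<Rightarrow> nat \<Rightarrow> nat \<Rightarrow> bool" where
  "cycle_side n c v \<longleftrightarrow> (int v - int c) mod int n \<le> int (n div 2)"

lemma cycle_side_reflect:
  assumes "odd n" and "c < n" and "v < n" and "v \<noteq> c"
  shows "cycle_side n c (cycle_reflect n c v) \<noteq> cycle_side n c v"
proof -
  have "0 < n" using assms(1) by (rule odd_pos)
  define r where "r = (int v - int c) mod int n"
  have "r \<noteq> 0"
  proof
    assume "r = 0"
    then have "int v mod int n = int c mod int n"
      unfolding r_def by (simp add: mod_eq_dvd_iff mod_eq_0_iff_dvd)
    then have "v mod n = c mod n"
      by (simp flip: of_nat_mod)
    with assms(2-4) show False by simp
  qed
  have "(int (cycle_reflect n c v) - int c) mod int n = (- (int v - int c)) mod int n"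
    unfolding int_cycle_reflect[OF \<open>0 < n\<close>] by (simp add: mod_diff_left_eq)
  also have "\<dots> = int n - r"
    using zmod_zminus1_eq_if[of "int v - int c" "int n"] \<open>r \<noteq> 0\<close> unfolding r_def by simp
  finally have "cycle_side n c (cycle_reflect n c v) \<longleftrightarrow> int n - r \<le> int (n div 2)"
    unfolding cycle_side_def by simp
  moreover have "cycle_side n c v \<longleftrightarrow> r \<le> int (n div 2)"
    unfolding cycle_side_def r_def ..
  moreover have "0 \<le> r"
    using \<open>0 < n\<close> unfolding r_def by simp
  with \<open>r \<noteq> 0\<close> have "0 < r"
    by simp
  moreover have "int n = 2 * int (n div 2) + 1"
    using odd_two_times_div_two_succ[OF assms(1)] by linarith
  ultimately show ?thesis
    by auto
qed

locale cycle_doubling =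
  fixes n :: nat and S :: "nat set" and lab :: "nat \<Rightarrow> nat" and c :: nat
  assumes odd_n: "odd n" and n_ge_3: "3 \<le> n"
    and dom: "ext_irr_dom_set (cycle_verts n) (cycle_adj n) S lab"
    and small_labels: "\<And>v. v \<in> S \<Longrightarrow> 2 * lab v \<le> n"
    and c_less: "c < n" and c_notin: "c \<notin> S"
begin

definition double_vertex :: "nat \<Rightarrow> bool \<Rightarrow> nat" where
  "double_vertex v b = cycle_lift n (if b then v else cycle_reflect n c v) (cycle_side n c v)"

definition double_label :: "nat \<Rightarrow> bool \<Rightarrow> nat" where
  "double_label v b = match_parity n (cycle_side n c v = b) (lab v)"

lemma n_pos: "0 < n"
  using n_ge_3 by simp

lemma dom_cycle:
  "S \<subseteq> {..<n}" "inj_on lab S" "\<exists>s\<in>S. lab s = 0"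
  "\<And>u. u < n \<Longrightarrow> \<exists>v\<in>S. cdist n (int v - int u) = lab v"
proof -
  have "2 \<le> n" using n_ge_3 by simp
  with dom show "S \<subseteq> {..<n}" "inj_on lab S" "\<exists>s\<in>S. lab s = 0"
    "\<And>u. u < n \<Longrightarrow> \<exists>v\<in>S. cdist n (int v - int u) = lab v"
    unfolding ext_irr_dom_set_cycle_iff[OF \<open>2 \<le> n\<close>] by auto
qed

lemma double_vertex_less: "v < n \<Longrightarrow> double_vertex v b < 2 * n"
  unfolding double_vertex_def using cycle_lift_less cycle_reflect_less[OF n_pos] by simp

lemma inj_double_vertex: "inj_on (\<lambda>(v, b). double_vertex v b) (S \<times> UNIV)"
proof (rule inj_onI, clarify)
  fix v b v' b' assume "v \<in> S" "v' \<in> S" and eq: "double_vertex v b = double_vertex v' b'"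
  then have vn: "v < n" "v' < n" "v \<noteq> c" "v' \<noteq> c"
    using dom_cycle(1) c_notin by auto
  then have "(if b then v else cycle_reflect n c v) = (if b' then v' else cycle_reflect n c v')"
    and "cycle_side n c v = cycle_side n c v'"
    using eq cycle_reflect_less[OF n_pos] unfolding double_vertex_def
    by (simp_all add: cycle_lift_eq_iff[OF odd_n])
  moreover have "cycle_side n c (cycle_reflect n c v) \<noteq> cycle_side n c v"
    "cycle_side n c (cycle_reflect n c v') \<noteq> cycle_side n c v'"
    using cycle_side_reflect[OF odd_n c_less] vn by auto
  ultimately show "v = v' \<and> b = b'"
    using vn by (cases b; cases b') (auto simp: cycle_reflect_eq_iff)
qed

lemma inj_double_label: "inj_on (\<lambda>(v, b). double_label v b) (S \<times> UNIV)"
proof (rule inj_onI, clarify)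
  fix v b v' b' assume "v \<in> S" "v' \<in> S" and "double_label v b = double_label v' b'"
  then have "lab v = lab v'" and side: "(cycle_side n c v = b) = (cycle_side n c v' = b')"
    unfolding double_label_def
    using match_parity_eq_iff[OF odd_n small_labels[OF \<open>v \<in> S\<close>] small_labels[OF \<open>v' \<in> S\<close>]]
    by simp_all
  then have "v = v'"
    using dom_cycle(2) \<open>v \<in> S\<close> \<open>v' \<in> S\<close> by (auto dest: inj_onD)
  with side show "v = v' \<and> b = b'"
    by auto
qed

lemma double_label_zero: "\<exists>v\<in>S. \<exists>b. double_label v b = 0"
proof -
  obtain v where "v \<in> S" "lab v = 0"
    using dom_cycle(3) by blast
  then have "double_label v (\<not> cycle_side n c v) = 0"
    unfolding double_label_def match_parity_def by simp
  with \<open>v \<in> S\<close> show ?thesis by blast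
qed

lemma double_dominates:
  assumes "x < 2 * n"
  shows "\<exists>v\<in>S. \<exists>b. cdist (2 * n) (int (double_vertex v b) - int x) = double_label v b"
proof -
  define y where "y = x mod n"
  have "y < n" and y: "int x mod int n = int y"
    using n_pos unfolding y_def by (auto simp: of_nat_mod)
  have cdist_x: "cdist n (int a - int x) = cdist n (int a - int y)" for a
    using y by (intro cdist_cong) (metis mod_diff_right_eq)
  show ?thesis
  proof (cases "even x")
    case True
    obtain v where "v \<in> S" and v: "cdist n (int v - int y) = lab v"
      using dom_cycle(4)[OF \<open>y < n\<close>] by blast
    then have "v < n" using dom_cycle(1) by auto
    have "cdist (2 * n) (int (double_vertex v True) - int x)
        = match_parity n (cycle_side n c v \<noteq> odd x) (cdist n (int v - int x))"
      unfolding double_vertex_def using cdist_double_cycle_lift[OF odd_n \<open>v < n\<close>] by simp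
    also have "\<dots> = double_label v True"
      using True v unfolding double_label_def cdist_x by simp
    finally show ?thesis
      using \<open>v \<in> S\<close> by blast
  next
    case False
    obtain v where "v \<in> S" and v: "cdist n (int v - int (cycle_reflect n c y)) = lab v"
      using dom_cycle(4)[OF cycle_reflect_less[OF n_pos]] by blast
    have "cdist (2 * n) (int (double_vertex v False) - int x)
        = match_parity n (cycle_side n c v \<noteq> odd x) (cdist n (int (cycle_reflect n c v) - int x))"
      unfolding double_vertex_def using cdist_double_cycle_lift[OF odd_n cycle_reflect_less[OF n_pos]]
      by simp
    also have "\<dots> = double_label v False"
      using False v unfolding double_label_def cdist_x cdist_cycle_reflect[OF n_pos] by simp
    finally show ?thesis
      using \<open>v \<in> S\<close> by blast
  qed
qed

theorem ext_irr_dom_set_double: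
  "ext_irr_dom_set (cycle_verts (2 * n)) (cycle_adj (2 * n))
     ((\<lambda>(v, b). double_vertex v b) ` (S \<times> UNIV))
     ((\<lambda>(v, b). double_label v b) \<circ> the_inv_into (S \<times> UNIV) (\<lambda>(v, b). double_vertex v b))"
proof (rule ext_irr_dom_set_imageI[OF inj_double_vertex inj_double_label])
  show "(\<lambda>(v, b). double_vertex v b) ` (S \<times> UNIV) \<subseteq> cycle_verts (2 * n)"
    using dom_cycle(1) double_vertex_less unfolding cycle_verts_def by auto
  show "\<exists>i\<in>S \<times> UNIV. (\<lambda>(v, b). double_label v b) i = 0"
    using double_label_zero by auto
  show "\<forall>u\<in>cycle_verts (2 * n). \<exists>i\<in>S \<times> UNIV.
      gdist (cycle_adj (2 * n)) u ((\<lambda>(v, b). double_vertex v b) i) = (\<lambda>(v, b). double_label v b) i"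
  proof
    fix u assume "u \<in> cycle_verts (2 * n)"
    then have "u < 2 * n" unfolding cycle_verts_def by simp
    then obtain v b where "v \<in> S"
      and v: "cdist (2 * n) (int (double_vertex v b) - int u) = double_label v b"
      using double_dominates by blast
    moreover have "gdist (cycle_adj (2 * n)) u (double_vertex v b)
        = cdist (2 * n) (int (double_vertex v b) - int u)"
      using gdist_cycle n_ge_3 \<open>u < 2 * n\<close> double_vertex_less dom_cycle(1) \<open>v \<in> S\<close> by auto
    ultimately show "\<exists>i\<in>S \<times> UNIV.
        gdist (cycle_adj (2 * n)) u ((\<lambda>(v, b). double_vertex v b) i) = (\<lambda>(v, b). double_label v b) i"
      by (intro bexI[of _ "(v, b)"]) simp_all
  qed
qed

end

lemma ext_irr_dom_set_cycle_double:
  assumes "odd n" and "3 \<le> n" and "ext_irr_dom_set (cycle_verts n) (cycle_adj n) S lab"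
  shows "\<exists>S' lab'. ext_irr_dom_set (cycle_verts (2 * n)) (cycle_adj (2 * n)) S' lab'"
proof -
  let ?S = "{v\<in>S. 2 * lab v \<le> n}"
  have "2 \<le> n" using assms(2) by simp
  have dom: "ext_irr_dom_set (cycle_verts n) (cycle_adj n) ?S lab"
    using \<open>2 \<le> n\<close> assms(3) by (rule ext_irr_dom_set_cycle_small_labels)
  then have "?S \<subseteq> {..<n}" "inj_on lab ?S"
    unfolding ext_irr_dom_set_cycle_iff[OF \<open>2 \<le> n\<close>] by auto
  then obtain c where "c < n" "c \<notin> ?S"
    using ex_vertex_notin_small_label_set[OF assms(2)] by blast
  then interpret cycle_doubling n ?S lab c
    using assms(1,2) dom by unfold_locales auto
  show ?thesis
    using ext_irr_dom_set_double by blast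
qed

theorem proposition4p8:
  fixes n :: nat
  assumes "odd n" and "3 \<le> n"
    and "admits_optimal_eids n"
  shows "admits_optimal_eids (2 * n)"
proof -
  obtain S lab where "ext_irr_dom_set (cycle_verts n) (cycle_adj n) S lab"
    using assms(3) unfolding admits_optimal_eids_def optimal_ext_irr_dom_set_def by blast
  then show ?thesis
    using ext_irr_dom_set_cycle_double[OF assms(1,2)] admits_optimal_eidsI by blast
qed

end
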